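(* Let $\Omega\subset\mathbb{R}^3$ be open, bounded and convex with $\mathcal{L}^3(\Omega)=1$, let $N\geq2$, fix a mass vector $\mathbf{m}$, let $T\in(0,\infty)$ and $\overline{\mathbf{z}}=(\overline{z}_1,\dots,\overline{z}_N)\in D$. Let $R>0$ be such that $\Omega\subset B_R(0)$. If $\mathbf{z}=(z_1,\dots,z_N):[0,T]\to D$ is a $C^1$-solution of $\dot{\mathbf{z}}=J_N(\mathbf{z}-\mathbf{x}(\mathbf{z}))$, $\mathbf{z}(0)=\overline{\mathbf{z}}$, then for each $i\in\{1,\dots,N\}$, $$|z_i(t)|\leq|\overline{z}_i|+RT\quad\forall t\in[0,T],\qquad |\dot z_i(t)|\leq|\overline{z}_i|+R(1+T)\quad\forall t\in(0,T).$$
   Context: $J$ is the $3\times3$ matrix with rows $(0,-1,0),(1,0,0),(0,0,0)$ and $J_N=\mathrm{diag}(J,\dots,J)\in\mathbb{R}^{3N\times3N}$. $D=\{\mathbf{z}\in\mathbb{R}^{3N}: z_i\neq z_j\text{ for }i\neq j\}$. Mass vector: $\mathbf{m}=(m_1,\dots,m_N)$ with $m_i>0$, $\sum m_i=1$. Laguerre cells: $C_i(\mathbf{z},\mathbf{w})=\{x\in\Omega:|x-z_i|^2-w_i\leq|x-z_j|^2-w_j\ \forall j\}$. For $\mathbf{z}\in D$, $\mathbf{w}_*(\mathbf{z})$ is the unique $\mathbf{w}\in\mathbb{R}^N$ with $w_N=0$ and $\mathcal{L}^3(C_i(\mathbf{z},\mathbf{w}))=m_i$ for all $i$; the optimal centroid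 map $\mathbf{x}=(x_1,\dots,x_N)$ has $x_i(\mathbf{z})$ equal to the centroid $\frac{1}{m_i}\int_{C_i(\mathbf{z},\mathbf{w}_*(\mathbf{z}))}x\,dx$. *)

theory Defs
  imports "HOL-Analysis.Analysis"
begin

text \<open>Particles are indexed by 0,...,N-1 (the paper's 1,...,N); a configuration is
  a function nat => real^3, only the values at indices below N matter.\<close>

definition Jmat :: "real^3 \<Rightarrow> real^3" where
  "Jmat v = vector [- (v$2), v$1, 0]"

definition in_D :: "nat \<Rightarrow> (nat \<Rightarrow> real^3) \<Rightarrow> bool" where
  "in_D N z \<longleftrightarrow> (\<forall>i<N. \<forall>j<N. i \<noteq> j \<longrightarrow> z i \<noteq> z j)"

definition laguerre_cell ::
  "(real^3) set \<Rightarrow> nat \<Rightarrow> (nat \<Rightarrow> real^3) \<Rightarrow> (nat \<Rightarrow> real) \<Rightarrow> nat \<Rightarrow> (real^3) set" where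
  "laguerre_cell \<Omega> N z w i =
     {x \<in> \<Omega>. \<forall>j<N. (norm (x - z i))\<^sup>2 - w i \<le> (norm (x - z j))\<^sup>2 - w j}"

text \<open>Optimal weights: the unique w with w_N = 0 (index N-1 here) and cell masses m_i;
  entries with index \<ge> N are fixed to 0 so that the choice is unique.\<close>
definition w_star ::
  "(real^3) set \<Rightarrow> nat \<Rightarrow> (nat \<Rightarrow> real) \<Rightarrow> (nat \<Rightarrow> real^3) \<Rightarrow> (nat \<Rightarrow> real)" where
  "w_star \<Omega> N m z = (THE w. w (N - 1) = 0 \<and> (\<forall>i\<ge>N. w i = 0) \<and>
      (\<forall>i<N. measure lebesgue (laguerre_cell \<Omega> N z w i) = m i))"

definition centroid_map ::
  "(real^3) set \<Rightarrow> nat \<Rightarrow> (nat \<Rightarrow> real) \<Rightarrow> (nat \<Rightarrow> real^3) \<Rightarrow> nat \<Rightarrow> real^3" where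
  "centroid_map \<Omega> N m z i =
     (1 / m i) *\<^sub>R integral (laguerre_cell \<Omega> N z (w_star \<Omega> N m z) i) (\<lambda>x. x)"

end

theory Submission
  imports Defs
begin

text \<open>Since \<open>J\<close> is a rotation
  followed by a projection, \<open>z\<^sub>i \<bullet> J z\<^sub>i = 0\<close>, so \<open>d/dt |z\<^sub>i| \<le> |x\<^sub>i|\<close>, and the centroid
  \<open>x\<^sub>i\<close> of a Laguerre cell of mass \<open>m\<^sub>i > 0\<close> inside \<open>\<Omega> \<subseteq> B\<^sub>R(0)\<close> has norm at most \<open>R\<close>.
  Integrating gives the bound on \<open>|z\<^sub>i|\<close>, and \<open>|J v| \<le> |v|\<close> the bound on the speed.
  The substantial part is that \<open>w\<^sub>*(z)\<close> is well defined, i.e. that the semi-discrete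
  transport problem has unique normalised optimal weights.\<close>

section \<open>Rotated drift\<close>

lemma inner_Jmat_self: "v \<bullet> Jmat v = 0"
  by (simp add: inner_vec_def sum_3 Jmat_def)

lemma norm_Jmat_le: "norm (Jmat v) \<le> norm v"
  by (simp add: norm_le inner_vec_def sum_3 Jmat_def)

lemma Jmat_diff: "Jmat (a - b) = Jmat a - Jmat b"
  by (simp add: vec_eq_iff forall_3 Jmat_def)

lemma norm_le_sqrt_norm_sq_add: "norm x \<le> sqrt (x \<bullet> x + e\<^sup>2)"
  by (metis le_add_same_cancel1 norm_eq_sqrt_inner real_sqrt_le_mono zero_le_power2)

text \<open>The regularised norm \<open>sqrt (|y|\<^sup>2 + e\<^sup>2)\<close> is differentiable and grows at rate at most \<open>R\<close>;
  let \<open>e \<rightarrow> 0\<close>.\<close>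
lemma norm_le_of_inner_derivative_le:
  fixes y y' :: "real \<Rightarrow> 'a::real_inner"
  assumes deriv: "\<And>s. s \<in> {0..T} \<Longrightarrow> (y has_vector_derivative y' s) (at s within {0..T})"
    and inner_le: "\<And>s. s \<in> {0..T} \<Longrightarrow> y s \<bullet> y' s \<le> R * norm (y s)"
    and "R \<ge> 0" and t: "t \<in> {0..T}"
  shows "norm (y t) \<le> norm (y 0) + R * t"
proof (rule field_le_epsilon)
  fix e :: real assume "e > 0"
  define q where "q s = sqrt (y s \<bullet> y s + e\<^sup>2)" for s
  have q_pos: "0 < y s \<bullet> y s + e\<^sup>2" for s
    using \<open>e > 0\<close> by (simp add: add_nonneg_pos)
  have "q t - R * t \<le> q 0 - R * 0"
  proof (rule DERIV_nonpos_imp_decreasing_open[of 0 t])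
    show "0 \<le> t" using t by simp
    have "continuous_on {0..T} y"
      using deriv continuous_on_eq_continuous_within has_vector_derivative_continuous by blast
    then have "continuous_on {0..t} y"
      using t by (auto elim: continuous_on_subset)
    then show "continuous_on {0..t} (\<lambda>s. q s - R * s)"
      unfolding q_def by (intro continuous_intros)
  next
    fix s assume s: "0 < s" "s < t"
    then have "(y has_vector_derivative y' s) (at s)"
      using deriv[of s] t at_within_Icc_at[of 0 s T] by simp
    then have "((\<lambda>s. y s \<bullet> y s + e\<^sup>2) has_real_derivative 2 * (y s \<bullet> y' s)) (at s)"
      unfolding has_vector_derivative_def has_field_derivative_def
      by (auto intro!: derivative_eq_intros simp: inner_commute algebra_simps)
    from DERIV_chain2[OF DERIV_real_sqrt[OF q_pos] this]
    have "(q has_real_derivative (y s \<bullet> y' s) / q s) (at s)"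
      unfolding q_def by (simp add: divide_simps)
    then have "((\<lambda>s. q s - R * s) has_real_derivative (y s \<bullet> y' s) / q s - R) (at s)"
      by (rule DERIV_diff[OF _ DERIV_cmult_Id])
    moreover have "y s \<bullet> y' s \<le> q s * R"
      using inner_le[of s] s t norm_le_sqrt_norm_sq_add[of "y s" e] \<open>R \<ge> 0\<close> unfolding q_def
      by (smt (verit) atLeastAtMost_iff mult_right_mono mult.commute)
    then have "(y s \<bullet> y' s) / q s - R \<le> 0"
      using q_pos[of s] unfolding q_def by (simp add: divide_simps mult.commute)
    ultimately show "\<exists>d. ((\<lambda>s. q s - R * s) has_real_derivative d) (at s) \<and> d \<le> 0"
      by blast
  qed
  moreover have "q 0 \<le> norm (y 0) + e"
  proof -
    have "q 0 \<le> sqrt ((norm (y 0) + e)\<^sup>2)"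
      unfolding q_def using \<open>e > 0\<close>
      by (intro real_sqrt_le_mono) (simp add: power2_sum power2_norm_eq_inner[symmetric])
    then show ?thesis using \<open>e > 0\<close> by simp
  qed
  ultimately show "norm (y t) \<le> norm (y 0) + R * t + e"
    using norm_le_sqrt_norm_sq_add[of "y t" e] unfolding q_def by linarith
qed

lemma Jmat_ode_bounds:
  fixes y c :: "real \<Rightarrow> real^3"
  assumes deriv: "\<And>t. t \<in> {0..T} \<Longrightarrow> (y has_vector_derivative Jmat (y t - c t)) (at t within {0..T})"
    and c_le: "\<And>t. t \<in> {0..T} \<Longrightarrow> norm (c t) \<le> R" and "R \<ge> 0"
  shows "\<forall>t\<in>{0..T}. norm (y t) \<le> norm (y 0) + R * T"
    and "\<forall>t\<in>{0<..<T}. norm (vector_derivative y (at t)) \<le> norm (y 0) + R * (1 + T)"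
proof -
  have "y t \<bullet> Jmat (y t - c t) \<le> R * norm (y t)" if "t \<in> {0..T}" for t
  proof -
    have "y t \<bullet> Jmat (y t - c t) = - (y t \<bullet> Jmat (c t))"
      by (simp add: Jmat_diff inner_diff_right inner_Jmat_self)
    also have "\<dots> \<le> norm (y t) * norm (Jmat (c t))"
      using Cauchy_Schwarz_ineq2[of "y t" "Jmat (c t)"] by linarith
    also have "\<dots> \<le> norm (y t) * R"
      using norm_Jmat_le[of "c t"] c_le[OF that] by (intro mult_left_mono) auto
    finally show ?thesis
      by (simp add: mult.commute)
  qed
  then have norm_le: "norm (y t) \<le> norm (y 0) + R * t" if "t \<in> {0..T}" for t
    using norm_le_of_inner_derivative_le[OF deriv _ \<open>R \<ge> 0\<close> that] by blast
  then show "\<forall>t\<in>{0..T}. norm (y t) \<le> norm (y 0) + R * T"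
    using \<open>R \<ge> 0\<close> by (smt (verit) atLeastAtMost_iff mult_left_mono)
  show "\<forall>t\<in>{0<..<T}. norm (vector_derivative y (at t)) \<le> norm (y 0) + R * (1 + T)"
  proof
    fix t assume t: "t \<in> {0<..<T}"
    then have "vector_derivative y (at t) = Jmat (y t - c t)"
      using deriv[of t] at_within_Icc_at[of 0 t T] by (simp add: vector_derivative_at)
    then have "norm (vector_derivative y (at t)) \<le> norm (y t) + norm (c t)"
      using norm_Jmat_le[of "y t - c t"] norm_triangle_ineq4[of "y t" "c t"] by simp
    also have "\<dots> \<le> norm (y 0) + R * t + R"
      using norm_le c_le t by (simp add: add_mono)
    also have "\<dots> \<le> norm (y 0) + R * (1 + T)"
      using t \<open>R \<ge> 0\<close> by (simp add: algebra_simps mult_left_mono)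
    finally show "norm (vector_derivative y (at t)) \<le> norm (y 0) + R * (1 + T)" .
  qed
qed

section \<open>Laguerre cells\<close>

lemma norm_centroid_le:
  fixes S :: "'a::euclidean_space set"
  assumes S: "S \<in> lmeasurable" and "S \<subseteq> cball 0 R" and "R \<ge> 0"
  shows "norm ((1 / measure lebesgue S) *\<^sub>R integral S (\<lambda>x. x)) \<le> R"
proof -
  have bound: "norm x \<le> R" if "x \<in> S" for x
    using that assms(2) by auto
  have "(\<lambda>x. x) absolutely_integrable_on S"
    using S bound continuous_imp_measurable_on_sets_lebesgue[of S "\<lambda>x. x"]
    by (intro measurable_bounded_by_integrable_imp_absolutely_integrable[where g="\<lambda>_. R"])
      (auto simp: integrable_on_const fmeasurableD continuous_on_id)
  then have "(\<lambda>x. x) integrable_on S"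
    using set_lebesgue_integral_eq_integral(1) by blast
  from integral_norm_bound_integral[OF this integrable_on_const[OF S] bound]
  have "norm (integral S (\<lambda>x. x)) \<le> R * measure lebesgue S"
    using lmeasure_integral[OF S] integral_cmul[of S R "\<lambda>_. 1::real"] by simp
  then show ?thesis
    using \<open>R \<ge> 0\<close> by (cases "measure lebesgue S = 0") (simp_all add: divide_simps mult.commute)
qed

locale laguerre_diagram =
  fixes \<Omega> :: "(real^3) set" and N :: nat and z :: "nat \<Rightarrow> real^3" and R :: real
  assumes open_domain: "open \<Omega>" and domain_subset_ball: "\<Omega> \<subseteq> ball 0 R"
    and sites_distinct: "in_D N z" and N_pos: "0 < N"
begin

abbreviation cell :: "(nat \<Rightarrow> real) \<Rightarrow> nat \<Rightarrow> (real^3) set" where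
  "cell w i \<equiv> laguerre_cell \<Omega> N z w i"

abbreviation cell_mass :: "(nat \<Rightarrow> real) \<Rightarrow> nat \<Rightarrow> real" where
  "cell_mass w i \<equiv> measure lebesgue (cell w i)"

abbreviation power_dist :: "(nat \<Rightarrow> real) \<Rightarrow> real^3 \<Rightarrow> nat \<Rightarrow> real" where
  "power_dist w x i \<equiv> (norm (x - z i))\<^sup>2 - w i"

lemma domain_lmeasurable: "\<Omega> \<in> lmeasurable"
  using domain_subset_ball open_domain bounded_ball bounded_subset lmeasurable_open by blast

lemma cell_subset_domain: "cell w i \<subseteq> \<Omega>"
  unfolding laguerre_cell_def by auto

lemma cell_lmeasurable: "cell w i \<in> lmeasurable"
proof -
  define H where "H = (\<Inter>j<N. {x. power_dist w x i \<le> power_dist w x j})"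
  have "closed H"
    unfolding H_def by (intro closed_INT ballI closed_Collect_le continuous_intros)
  then have "H \<in> sets lebesgue"
    by (metis borel_closed sets_completionI_sets sets_lborel)
  moreover have "cell w i = \<Omega> \<inter> H"
    unfolding laguerre_cell_def H_def by auto
  ultimately show ?thesis
    using domain_lmeasurable fmeasurable_Int_fmeasurable by metis
qed

lemma cell_mono:
  assumes "\<And>j. j < N \<Longrightarrow> w i - w j \<le> w' i - w' j"
  shows "cell w i \<subseteq> cell w' i"
  using assms unfolding laguerre_cell_def by (auto, smt (verit))

lemma cell_mass_mono:
  assumes "\<And>j. j < N \<Longrightarrow> w i - w j \<le> w' i - w' j"
  shows "cell_mass w i \<le> cell_mass w' i"
  using cell_mono[of w i w', OF assms] cell_lmeasurable by (meson fmeasurableD measure_mono_fmeasurable)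

lemma negligible_cell_Int:
  assumes "i < N" "j < N" "i \<noteq> j"
  shows "negligible (cell w i \<inter> cell w j)"
proof -
  let ?a = "2 *\<^sub>R (z j - z i)" and ?b = "(norm (z j))\<^sup>2 - (norm (z i))\<^sup>2 + w i - w j"
  have "cell w i \<inter> cell w j \<subseteq> {x. ?a \<bullet> x = ?b}"
  proof
    fix x assume "x \<in> cell w i \<inter> cell w j"
    then have "power_dist w x i = power_dist w x j"
      using assms unfolding laguerre_cell_def by force
    then show "x \<in> {x. ?a \<bullet> x = ?b}"
      by (simp add: power2_norm_eq_inner inner_diff_left inner_diff_right inner_commute algebra_simps)
  qed
  moreover have "?a \<noteq> 0"
    using sites_distinct assms unfolding in_D_def by auto
  ultimately show ?thesis
    using negligible_hyperplane negligible_subset by blast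
qed

lemma measure_UN_cells:
  assumes "I \<subseteq> {..<N}"
  shows "measure lebesgue (\<Union>i\<in>I. cell w i) = (\<Sum>i\<in>I. cell_mass w i)"
  using finite_subset[OF assms] cell_lmeasurable negligible_cell_Int assms
  by (intro measure_negligible_finite_Union_image) (auto simp: pairwise_def subset_iff)

lemma UN_cells: "(\<Union>i<N. cell w i) = \<Omega>"
proof
  show "(\<Union>i<N. cell w i) \<subseteq> \<Omega>"
    using cell_subset_domain by blast
  show "\<Omega> \<subseteq> (\<Union>i<N. cell w i)"
  proof
    fix x assume "x \<in> \<Omega>"
    obtain i where "i < N" "\<forall>j<N. power_dist w x i \<le> power_dist w x j"
      using ex_is_arg_min_if_finite[of "{..<N}" "power_dist w x"] N_pos
      unfolding is_arg_min_linorder by auto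
    with \<open>x \<in> \<Omega>\<close> show "x \<in> (\<Union>i<N. cell w i)"
      unfolding laguerre_cell_def by auto
  qed
qed

lemma sum_cell_mass: "(\<Sum>i<N. cell_mass w i) = measure lebesgue \<Omega>"
  using measure_UN_cells[of "{..<N}" w] UN_cells by simp

text \<open>Upper semicontinuity: a point lying in \<open>cell (v k) i\<close> for infinitely many \<open>k\<close> lies in
  \<open>cell w i\<close>, so the decreasing unions \<open>\<Union>k\<ge>n. cell (v k) i\<close> shrink to a subset of \<open>cell w i\<close>.\<close>
lemma eventually_cell_mass_less:
  assumes conv: "\<forall>j<N. (\<lambda>n. v n j) \<longlonglongrightarrow> w j" and "e > 0" and "i < N"
  shows "eventually (\<lambda>n. cell_mass (v n) i < cell_mass w i + e) sequentially"
proof -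
  define B where "B n = (\<Union>k\<in>{n..}. cell (v k) i)" for n
  have B_sets: "B n \<in> sets lebesgue" for n
    unfolding B_def using cell_lmeasurable by (intro sets.countable_UN') auto
  have "B n \<subseteq> \<Omega>" for n
    unfolding B_def using cell_subset_domain by blast
  then have B_lmeasurable: "B n \<in> lmeasurable" for n
    using B_sets domain_lmeasurable by (meson fmeasurableI2)
  have "decseq B"
    unfolding decseq_def B_def by (auto, meson atLeast_iff order_trans)
  then have lim: "(\<lambda>n. measure lebesgue (B n)) \<longlonglongrightarrow> measure lebesgue (\<Inter>n. B n)"
    using B_sets fmeasurableD2[OF B_lmeasurable] by (intro Lim_measure_decseq) auto
  have "(\<Inter>n. B n) \<subseteq> cell w i"
  proof
    fix x assume x: "x \<in> (\<Inter>n. B n)"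
    have "power_dist w x i \<le> power_dist w x j" if "j < N" for j
    proof (rule ccontr)
      define a where "a = (norm (x - z i))\<^sup>2 - (norm (x - z j))\<^sup>2"
      assume "\<not> ?thesis"
      then have "w i - w j < a" unfolding a_def by simp
      have "(\<lambda>n. v n i - v n j) \<longlonglongrightarrow> w i - w j"
        using conv \<open>i < N\<close> \<open>j < N\<close> by (intro tendsto_diff) auto
      from order_tendstoD(2)[OF this \<open>w i - w j < a\<close>]
      obtain n0 where n0: "\<forall>n\<ge>n0. v n i - v n j < a"
        unfolding eventually_sequentially by blast
      from x obtain k where "k \<ge> n0" "x \<in> cell (v k) i"
        unfolding B_def by blast
      then show False
        using n0 \<open>j < N\<close> unfolding laguerre_cell_def a_def by force
    qed
    moreover have "x \<in> \<Omega>"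
      using x cell_subset_domain unfolding B_def by blast
    ultimately show "x \<in> cell w i"
      unfolding laguerre_cell_def by auto
  qed
  moreover have "(\<Inter>n. B n) \<in> sets lebesgue"
    using B_sets by (intro sets.countable_INT') auto
  ultimately have "measure lebesgue (\<Inter>n. B n) \<le> cell_mass w i"
    using cell_lmeasurable by (intro measure_mono_fmeasurable) auto
  then have "measure lebesgue (\<Inter>n. B n) < cell_mass w i + e"
    using \<open>e > 0\<close> by simp
  from order_tendstoD(2)[OF lim this]
  show ?thesis
  proof (rule eventually_mono)
    fix n
    have "cell (v n) i \<subseteq> B n"
      unfolding B_def by auto
    then have "cell_mass (v n) i \<le> measure lebesgue (B n)"
      using B_lmeasurable cell_lmeasurable by (intro measure_mono_fmeasurable) auto
    then show "measure lebesgue (B n) < cell_mass w i + e \<Longrightarrow> cell_mass (v n) i < cell_mass w i + e"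
      by simp
  qed
qed

text \<open>Lower semicontinuity follows from upper semicontinuity of the other \<open>N - 1\<close> cells,
  since the total mass is fixed.\<close>
lemma cell_mass_continuous:
  assumes conv: "\<forall>j<N. (\<lambda>n. v n j) \<longlonglongrightarrow> w j" and "i < N"
  shows "(\<lambda>n. cell_mass (v n) i) \<longlonglongrightarrow> cell_mass w i"
proof (rule order_tendstoI)
  fix a assume "cell_mass w i < a"
  then show "eventually (\<lambda>n. cell_mass (v n) i < a) sequentially"
    using eventually_cell_mass_less[OF conv, of "a - cell_mass w i" i] \<open>i < N\<close> by simp
next
  fix a assume "a < cell_mass w i"
  define e where "e = (cell_mass w i - a) / N"
  have "e > 0"
    using \<open>a < cell_mass w i\<close> N_pos unfolding e_def by simp
  define A where "A = {..<N} - {i}"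
  have sum_split: "cell_mass u i + (\<Sum>j\<in>A. cell_mass u j) = measure lebesgue \<Omega>" for u
    using sum_cell_mass[of u] sum.remove[of "{..<N}" i "cell_mass u"] \<open>i < N\<close>
    unfolding A_def by simp
  have "card A = N - 1"
    unfolding A_def using \<open>i < N\<close> by simp
  then have "real (card A) * e < cell_mass w i - a"
    using \<open>e > 0\<close> N_pos unfolding e_def by (simp add: of_nat_diff field_simps)
  have "\<forall>j\<in>A. eventually (\<lambda>n. cell_mass (v n) j < cell_mass w j + e) sequentially"
    using eventually_cell_mass_less[OF conv] \<open>e > 0\<close> unfolding A_def by auto
  then have "eventually (\<lambda>n. \<forall>j\<in>A. cell_mass (v n) j < cell_mass w j + e) sequentially"
    unfolding A_def by (simp add: eventually_ball_finite)
  then show "eventually (\<lambda>n. a < cell_mass (v n) i) sequentially"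
  proof (rule eventually_mono)
    fix n assume "\<forall>j\<in>A. cell_mass (v n) j < cell_mass w j + e"
    then have "(\<Sum>j\<in>A. cell_mass (v n) j) \<le> (\<Sum>j\<in>A. cell_mass w j) + real (card A) * e"
      using sum_mono[of A "cell_mass (v n)" "\<lambda>j. cell_mass w j + e"]
      by (simp add: sum.distrib less_imp_le)
    then show "a < cell_mass (v n) i"
      using sum_split[of "v n"] sum_split[of w] \<open>real (card A) * e < cell_mass w i - a\<close>
      by linarith
  qed
qed

definition sq_dist_bound :: real where
  "sq_dist_bound = (\<Sum>k<N. (R + norm (z k))\<^sup>2)"

lemma sq_dist_le_bound:
  assumes "x \<in> \<Omega>" "k < N"
  shows "(norm (x - z k))\<^sup>2 \<le> sq_dist_bound"
proof -
  have "norm (x - z k) \<le> R + norm (z k)"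
    using assms domain_subset_ball norm_triangle_ineq4[of x "z k"] by force
  then have "(norm (x - z k))\<^sup>2 \<le> (R + norm (z k))\<^sup>2"
    by (simp add: power_mono)
  also have "\<dots> \<le> sq_dist_bound"
    unfolding sq_dist_bound_def using assms(2) by (intro member_le_sum) auto
  finally show ?thesis .
qed

lemma cell_empty_if_weight_gap:
  assumes "k < N" "w i + sq_dist_bound < w k"
  shows "cell w i = {}"
proof (rule ccontr)
  assume "cell w i \<noteq> {}"
  then obtain x where "x \<in> \<Omega>" "power_dist w x i \<le> power_dist w x k"
    using assms unfolding laguerre_cell_def by auto
  then show False
    using sq_dist_le_bound[of x k] assms by (smt (verit) zero_le_power2)
qed

lemma negligible_UN_cells_diff:
  assumes "I \<subseteq> {..<N}" and "\<And>i. i \<in> I \<Longrightarrow> cell w i \<subseteq> cell w' i"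
    and "\<And>i. i \<in> I \<Longrightarrow> cell_mass w' i = cell_mass w i"
  shows "negligible ((\<Union>i\<in>I. cell w' i) - (\<Union>i\<in>I. cell w i))"
proof -
  have fin: "finite I"
    using assms(1) finite_subset by blast
  have "measure lebesgue (\<Union>i\<in>I. cell w' i) = measure lebesgue (\<Union>i\<in>I. cell w i)"
    using measure_UN_cells[OF assms(1)] assms(3) by simp
  moreover have "(\<Union>i\<in>I. cell w i) \<subseteq> (\<Union>i\<in>I. cell w' i)"
    using assms(2) by blast
  moreover have "(\<Union>i\<in>I. cell w i) \<in> lmeasurable" "(\<Union>i\<in>I. cell w' i) \<in> lmeasurable"
    using fin cell_lmeasurable by (auto intro: fmeasurable.finite_UN)
  ultimately show ?thesis
    by (simp add: negligible_iff_measure0 fmeasurable.Diff measurable_measure_Diff)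
qed

lemma mem_UN_cells_diff:
  assumes "x \<in> \<Omega>" and I: "\<forall>i\<in>I. w' i = w i + M" and J: "\<forall>j\<in>{..<N} - I. w' j \<le> w j + M - \<delta>"
    and "j \<in> {..<N} - I" "\<forall>i\<in>I. power_dist w x j < power_dist w x i"
    and "i \<in> I" "\<forall>j\<in>{..<N} - I. power_dist w x i < power_dist w x j + \<delta>"
    and "finite I"
  shows "x \<in> (\<Union>i\<in>I. cell w' i) - (\<Union>i\<in>I. cell w i)"
proof -
  have "x \<notin> cell w i'" if "i' \<in> I" for i'
    using assms(4,5) that unfolding laguerre_cell_def by fastforce
  moreover obtain i' where i': "i' \<in> I" "\<forall>l\<in>I. power_dist w x i' \<le> power_dist w x l"
    using ex_is_arg_min_if_finite[of I "power_dist w x"] \<open>finite I\<close> \<open>i \<in> I\<close>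
    unfolding is_arg_min_linorder by blast
  have "power_dist w' x i' \<le> power_dist w' x l" if "l < N" for l
  proof (cases "l \<in> I")
    case True
    then show ?thesis using i' I by auto
  next
    case False
    have "power_dist w x i' \<le> power_dist w x i"
      using i' assms(6) by blast
    moreover have "power_dist w x i < power_dist w x l + \<delta>"
      using assms(7) False that by blast
    moreover have "w' i' = w i' + M" "w' l \<le> w l + M - \<delta>"
      using i' I J False that by auto
    ultimately show ?thesis
      by linarith
  qed
  then have "x \<in> cell w' i'"
    using \<open>x \<in> \<Omega>\<close> unfolding laguerre_cell_def by auto
  ultimately show ?thesis
    using i' by blast
qed

text \<open>If \<open>w' - w\<close> attains its maximum exactly on \<open>I\<close>, the cells of \<open>I\<close> for \<open>w'\<close> gain an open
  set over those for \<open>w\<close>: the region where some site outside \<open>I\<close> beats all sites of \<open>I\<close>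
  for \<open>w\<close> and the region where some site of \<open>I\<close> is within the gap \<open>\<delta>\<close> of winning are open,
  cover \<open>\<Omega>\<close> and are both nonempty, so by connectedness they overlap.\<close>
lemma not_negligible_UN_cells_diff:
  assumes "connected \<Omega>" and "I \<subseteq> {..<N}"
    and I: "\<forall>i\<in>I. w' i = w i + M" and J: "\<forall>j\<in>{..<N} - I. w' j < w j + M"
    and "i0 \<in> I" "cell w i0 \<noteq> {}" and "j0 \<in> {..<N} - I" "cell w' j0 \<noteq> {}"
  shows "\<not> negligible ((\<Union>i\<in>I. cell w' i) - (\<Union>i\<in>I. cell w i))"
proof
  let ?J = "{..<N} - I"
  have fin: "finite I" "finite ?J"
    using assms(2) finite_subset by auto
  define \<delta> where "\<delta> = M - Max ((\<lambda>j. w' j - w j) ` ?J)"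
  have "Max ((\<lambda>j. w' j - w j) ` ?J) \<in> (\<lambda>j. w' j - w j) ` ?J"
    using fin \<open>j0 \<in> ?J\<close> by (intro Max_in) auto
  then have "\<delta> > 0"
    unfolding \<delta>_def using J by force
  have J': "\<forall>j\<in>?J. w' j \<le> w j + M - \<delta>"
  proof
    fix j assume "j \<in> ?J"
    then have "w' j - w j \<le> Max ((\<lambda>j. w' j - w j) ` ?J)"
      using fin by (intro Max_ge) auto
    then show "w' j \<le> w j + M - \<delta>"
      unfolding \<delta>_def by simp
  qed
  define P1 where "P1 = \<Omega> \<inter> (\<Union>i\<in>I. \<Inter>j\<in>?J. {x. power_dist w x i < power_dist w x j + \<delta>})"
  define P2 where "P2 = \<Omega> \<inter> (\<Union>j\<in>?J. \<Inter>i\<in>I. {x. power_dist w x j < power_dist w x i})"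
  have "open P1" "open P2"
    unfolding P1_def P2_def using fin open_domain
    by (intro open_Int open_UN open_INT ballI open_Collect_less continuous_intros; simp)+
  moreover have "\<Omega> \<subseteq> P1 \<union> P2"
  proof
    fix x assume "x \<in> \<Omega>"
    obtain i where i: "i \<in> I" "\<forall>l\<in>I. power_dist w x i \<le> power_dist w x l"
      using ex_is_arg_min_if_finite[of I "power_dist w x"] fin \<open>i0 \<in> I\<close>
      unfolding is_arg_min_linorder by blast
    obtain j where j: "j \<in> ?J" "\<forall>l\<in>?J. power_dist w x j \<le> power_dist w x l"
      using ex_is_arg_min_if_finite[of ?J "power_dist w x"] fin \<open>j0 \<in> ?J\<close>
      unfolding is_arg_min_linorder by blast
    show "x \<in> P1 \<union> P2"
    proof (cases "power_dist w x j < power_dist w x i")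
      case True
      then show ?thesis
        using i j \<open>x \<in> \<Omega>\<close> unfolding P2_def by force
    next
      case False
      then show ?thesis
        using i j \<open>x \<in> \<Omega>\<close> \<open>\<delta> > 0\<close> unfolding P1_def by force
    qed
  qed
  moreover have "P1 \<inter> \<Omega> \<noteq> {}"
  proof -
    obtain x where "x \<in> cell w i0"
      using assms(6) by blast
    then have "x \<in> \<Omega>" "\<forall>j\<in>?J. power_dist w x i0 < power_dist w x j + \<delta>"
      using \<open>\<delta> > 0\<close> unfolding laguerre_cell_def by force+
    then show ?thesis
      using \<open>i0 \<in> I\<close> unfolding P1_def by blast
  qed
  moreover have "P2 \<inter> \<Omega> \<noteq> {}"
  proof -
    obtain x where "x \<in> cell w' j0"
      using assms(8) by blast
    then have x: "x \<in> \<Omega>" "\<forall>l<N. power_dist w' x j0 \<le> power_dist w' x l"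
      unfolding laguerre_cell_def by auto
    have "power_dist w x j0 < power_dist w x i" if "i \<in> I" for i
    proof -
      have "power_dist w' x j0 \<le> power_dist w' x i"
        using x(2) that assms(2) by blast
      moreover have "w' i = w i + M" "w' j0 < w j0 + M"
        using that I J \<open>j0 \<in> ?J\<close> by auto
      ultimately show ?thesis
        by linarith
    qed
    then show ?thesis
      using x(1) \<open>j0 \<in> ?J\<close> unfolding P2_def by blast
  qed
  ultimately have "P1 \<inter> P2 \<inter> \<Omega> \<noteq> {}"
    using connectedD[OF assms(1) \<open>open P1\<close> \<open>open P2\<close>] by blast
  then have "\<not> negligible (P1 \<inter> P2)"
    using open_not_negligible[OF open_Int[OF \<open>open P1\<close> \<open>open P2\<close>]] by blast
  moreover have "P1 \<inter> P2 \<subseteq> (\<Union>i\<in>I. cell w' i) - (\<Union>i\<in>I. cell w i)"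
  proof
    fix x assume x: "x \<in> P1 \<inter> P2"
    then obtain i where "x \<in> \<Omega>" "i \<in> I" "\<forall>j\<in>?J. power_dist w x i < power_dist w x j + \<delta>"
      unfolding P1_def by auto
    moreover obtain j where "j \<in> ?J" "\<forall>i\<in>I. power_dist w x j < power_dist w x i"
      using x unfolding P2_def by auto
    ultimately show "x \<in> (\<Union>i\<in>I. cell w' i) - (\<Union>i\<in>I. cell w i)"
      by (intro mem_UN_cells_diff[OF _ I J' _ _ _ _ fin(1)])
  qed
  moreover assume "negligible ((\<Union>i\<in>I. cell w' i) - (\<Union>i\<in>I. cell w i))"
  ultimately show False
    using negligible_subset by blast
qed

end

section \<open>Optimal weights\<close>

locale laguerre_transport = laguerre_diagram +
  fixes m :: "nat \<Rightarrow> real"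
  assumes masses_pos: "\<forall>i<N. 0 < m i"
    and sum_masses: "(\<Sum>i<N. m i) = measure lebesgue \<Omega>"
begin

definition optimal_weights :: "(nat \<Rightarrow> real) \<Rightarrow> bool" where
  "optimal_weights w \<longleftrightarrow> w (N - 1) = 0 \<and> (\<forall>i\<ge>N. w i = 0) \<and> (\<forall>i<N. cell_mass w i = m i)"

text \<open>Existence is proved by Perron's method: raising \<open>w i\<close> enlarges cell \<open>i\<close> and shrinks
  all others, so the pointwise supremum of the weights whose first \<open>N - 1\<close> cells are not
  too heavy is a solution.\<close>
definition subsolutions :: "(nat \<Rightarrow> real) set" where
  "subsolutions = {w. w (N - 1) = 0 \<and> (\<forall>i\<ge>N. w i = 0) \<and> (\<forall>i<N - 1. cell_mass w i \<le> m i)}"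

lemma sum_lessThan_N: "(\<Sum>i<N. g i) = (\<Sum>i<N - 1. g i) + g (N - 1)"
  using N_pos sum.lessThan_Suc[of g "N - 1"] by simp

lemma subsolutions_nonempty: "subsolutions \<noteq> {}"
proof -
  define w where "w i = (if i < N - 1 then - (sq_dist_bound + 1) else 0)" for i
  have "cell w i = {}" if "i < N - 1" for i
    using that by (intro cell_empty_if_weight_gap[of "N - 1"]) (auto simp: w_def)
  then have "w \<in> subsolutions"
    using masses_pos unfolding subsolutions_def by (auto simp: w_def less_imp_le)
  then show ?thesis by blast
qed

lemma subsolution_le_bound:
  assumes "w \<in> subsolutions" "i < N"
  shows "w i \<le> sq_dist_bound"
proof (rule ccontr)
  assume "\<not> w i \<le> sq_dist_bound"
  then have "cell w (N - 1) = {}"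
    using assms by (intro cell_empty_if_weight_gap[of i]) (auto simp: subsolutions_def)
  then have "(\<Sum>j<N - 1. cell_mass w j) = measure lebesgue \<Omega>"
    using sum_cell_mass[of w] sum_lessThan_N[of "cell_mass w"] by simp
  moreover have "(\<Sum>j<N - 1. cell_mass w j) \<le> (\<Sum>j<N - 1. m j)"
    using assms unfolding subsolutions_def by (intro sum_mono) auto
  moreover have "(\<Sum>j<N - 1. m j) < measure lebesgue \<Omega>"
    using sum_masses sum_lessThan_N[of m] masses_pos[rule_format, of "N - 1"] N_pos by simp
  ultimately show False by simp
qed

lemma max_subsolutions:
  assumes "w \<in> subsolutions" "w' \<in> subsolutions"
  shows "(\<lambda>i. max (w i) (w' i)) \<in> subsolutions"
proof -
  let ?v = "\<lambda>i. max (w i) (w' i)"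
  have "cell_mass ?v i \<le> m i" if "i < N - 1" for i
  proof (cases "w' i \<le> w i")
    case True
    then have "cell_mass ?v i \<le> cell_mass w i" by (intro cell_mass_mono) auto
    then show ?thesis using assms that unfolding subsolutions_def by force
  next
    case False
    then have "cell_mass ?v i \<le> cell_mass w' i" by (intro cell_mass_mono) auto
    then show ?thesis using assms that unfolding subsolutions_def by force
  qed
  then show ?thesis using assms unfolding subsolutions_def by auto
qed

definition sup_weights :: "nat \<Rightarrow> real" where
  "sup_weights i = (if i < N then SUP w\<in>subsolutions. w i else 0)"

lemma bdd_above_subsolutions: "i < N \<Longrightarrow> bdd_above ((\<lambda>w. w i) ` subsolutions)"
  by (rule bdd_aboveI2[where M = sq_dist_bound]) (rule subsolution_le_bound)

lemma le_sup_weights: "w \<in> subsolutions \<Longrightarrow> w i \<le> sup_weights i"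
  unfolding sup_weights_def subsolutions_def
  using cSUP_upper[of w subsolutions "\<lambda>w. w i"] bdd_above_subsolutions[of i]
  by (auto simp: subsolutions_def)

lemma sup_weights_approx:
  assumes "d > 0"
  shows "\<exists>v\<in>subsolutions. \<forall>j<N. sup_weights j - d < v j"
proof -
  have "\<exists>v\<in>subsolutions. \<forall>j<n. sup_weights j - d < v j" if "n \<le> N" for n
    using that
  proof (induction n)
    case 0
    then show ?case using subsolutions_nonempty by auto
  next
    case (Suc n)
    then obtain v where v: "v \<in> subsolutions" "\<forall>j<n. sup_weights j - d < v j"
      by auto
    have "sup_weights n - d < (SUP w\<in>subsolutions. w n)"
      using Suc.prems assms unfolding sup_weights_def by simp
    then obtain u where u: "u \<in> subsolutions" "sup_weights n - d < u n"
      using less_cSUP_iff[OF subsolutions_nonempty bdd_above_subsolutions] Suc.prems by auto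
    show ?case
      using v u max_subsolutions less_Suc_eq
      by (intro bexI[of _ "\<lambda>i. max (v i) (u i)"]) auto
  qed
  then show ?thesis by blast
qed

lemma sup_weights_subsolution: "sup_weights \<in> subsolutions"
proof -
  have "\<forall>n. \<exists>v\<in>subsolutions. \<forall>j<N. sup_weights j - inverse (real (Suc n)) < v j"
    using sup_weights_approx by simp
  then obtain v where v: "\<And>n. v n \<in> subsolutions"
    "\<And>n j. j < N \<Longrightarrow> sup_weights j - inverse (real (Suc n)) < v n j"
    by metis
  have conv: "\<forall>j<N. (\<lambda>n. v n j) \<longlonglongrightarrow> sup_weights j"
  proof (intro allI impI)
    fix j assume "j < N"
    have lower: "(\<lambda>n. sup_weights j - inverse (real (Suc n))) \<longlonglongrightarrow> sup_weights j"
      using tendsto_diff[OF tendsto_const LIMSEQ_inverse_real_of_nat] by simp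
    show "(\<lambda>n. v n j) \<longlonglongrightarrow> sup_weights j"
      by (rule tendsto_sandwich[OF _ _ lower tendsto_const])
        (use v \<open>j < N\<close> le_sup_weights in \<open>auto intro!: always_eventually less_imp_le\<close>)
  qed
  have "cell_mass sup_weights i \<le> m i" if "i < N - 1" for i
    using that v(1) unfolding subsolutions_def
    by (intro LIMSEQ_le_const2[OF cell_mass_continuous[OF conv]]) auto
  moreover have "sup_weights (N - 1) = 0"
  proof -
    have "(\<lambda>w. w (N - 1)) ` subsolutions = {0}"
      using subsolutions_nonempty unfolding subsolutions_def by auto
    then show ?thesis unfolding sup_weights_def using N_pos by simp
  qed
  ultimately show ?thesis
    unfolding subsolutions_def sup_weights_def by auto
qed

text \<open>If cell \<open>k\<close> were too light, raising \<open>w k\<close> slightly would give a larger subsolution.\<close>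
lemma cell_mass_sup_weights:
  assumes "k < N - 1"
  shows "cell_mass sup_weights k = m k"
proof (rule ccontr)
  assume "cell_mass sup_weights k \<noteq> m k"
  then have lt: "cell_mass sup_weights k < m k"
    using sup_weights_subsolution assms unfolding subsolutions_def by force
  define v where "v n = sup_weights(k := sup_weights k + inverse (real (Suc n)))" for n
  have "(\<lambda>n. v n j) \<longlonglongrightarrow> sup_weights j" for j
    unfolding v_def
    using tendsto_add[OF tendsto_const LIMSEQ_inverse_real_of_nat, of "sup_weights k"]
    by (cases "j = k") simp_all
  then have "\<forall>\<^sub>F n in sequentially. cell_mass (v n) k < m k"
    using assms by (intro order_tendstoD(2)[OF cell_mass_continuous lt]) auto
  then obtain n where n: "cell_mass (v n) k < m k"
    unfolding eventually_sequentially by blast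
  have "cell_mass (v n) j \<le> m j" if "j < N - 1" for j
  proof (cases "j = k")
    case True
    then show ?thesis using n by simp
  next
    case False
    then have "cell_mass (v n) j \<le> cell_mass sup_weights j"
      by (intro cell_mass_mono) (auto simp: v_def)
    then show ?thesis
      using sup_weights_subsolution that unfolding subsolutions_def by force
  qed
  then have "v n \<in> subsolutions"
    using sup_weights_subsolution assms unfolding subsolutions_def v_def by auto
  then have "v n k \<le> sup_weights k"
    by (rule le_sup_weights)
  then show False
    unfolding v_def by simp
qed

lemma optimal_sup_weights: "optimal_weights sup_weights"
proof -
  have "cell_mass sup_weights (N - 1) = m (N - 1)"
    using sum_cell_mass[of sup_weights] sum_lessThan_N[of "cell_mass sup_weights"]
      sum_masses sum_lessThan_N[of m] cell_mass_sup_weights by simp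
  then have "cell_mass sup_weights i = m i" if "i < N" for i
    using that cell_mass_sup_weights less_antisym[of i "N - 1"] N_pos by fastforce
  then show ?thesis
    using sup_weights_subsolution unfolding optimal_weights_def subsolutions_def by auto
qed

lemma cell_nonempty: "optimal_weights w \<Longrightarrow> i < N \<Longrightarrow> cell w i \<noteq> {}"
  using masses_pos unfolding optimal_weights_def by force

text \<open>Compare \<open>w\<close> and \<open>w'\<close> on the set \<open>I\<close> where \<open>w' - w\<close> is maximal: the cells of \<open>I\<close> grow, yet
  keep their masses, which forces \<open>I\<close> to contain all indices.\<close>
lemma optimal_weights_unique:
  assumes "connected \<Omega>" and w: "optimal_weights w" and w': "optimal_weights w'"
  shows "w = w'"
proof -
  define M where "M = Max ((\<lambda>i. w' i - w i) ` {..<N})"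
  define I where "I = {i. i < N \<and> w' i - w i = M}"
  have "M \<in> (\<lambda>i. w' i - w i) ` {..<N}"
    unfolding M_def using N_pos by (intro Max_in) auto
  then obtain i0 where "i0 \<in> I"
    unfolding I_def by auto
  have M_ge: "w' j - w j \<le> M" if "j < N" for j
    unfolding M_def using that by (intro Max_ge) auto
  have "I \<subseteq> {..<N}"
    unfolding I_def by auto
  have diff_eq_M: "w' j - w j = M" if "j < N" for j
  proof (rule ccontr)
    assume "w' j - w j \<noteq> M"
    then have "j \<in> {..<N} - I"
      using that unfolding I_def by auto
    have "cell w i \<subseteq> cell w' i" if "i \<in> I" for i
    proof (rule cell_mono)
      fix l assume "l < N"
      then show "w i - w l \<le> w' i - w' l"
        using M_ge[of l] that unfolding I_def by simp
    qed
    moreover have "cell_mass w' i = cell_mass w i" if "i \<in> I" for i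
      using that w w' unfolding I_def optimal_weights_def by auto
    ultimately have "negligible ((\<Union>i\<in>I. cell w' i) - (\<Union>i\<in>I. cell w i))"
      using negligible_UN_cells_diff[OF \<open>I \<subseteq> {..<N}\<close>] by blast
    moreover have "\<forall>i\<in>I. w' i = w i + M"
      unfolding I_def by auto
    moreover have "\<forall>l\<in>{..<N} - I. w' l < w l + M"
      using M_ge unfolding I_def by fastforce
    ultimately show False
      using not_negligible_UN_cells_diff[OF \<open>connected \<Omega>\<close> \<open>I \<subseteq> {..<N}\<close> _ _ \<open>i0 \<in> I\<close>
          cell_nonempty[OF w] \<open>j \<in> {..<N} - I\<close> cell_nonempty[OF w']]
        \<open>i0 \<in> I\<close> \<open>I \<subseteq> {..<N}\<close> \<open>j \<in> {..<N} - I\<close> by blast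
  qed
  have "M = 0"
    using diff_eq_M[of "N - 1"] N_pos w w' unfolding optimal_weights_def by simp
  show ?thesis
  proof
    fix i show "w i = w' i"
      using diff_eq_M[of i] \<open>M = 0\<close> w w' unfolding optimal_weights_def
      by (cases "i < N") auto
  qed
qed

lemma optimal_w_star:
  assumes "connected \<Omega>"
  shows "optimal_weights (w_star \<Omega> N m z)"
proof -
  have "w_star \<Omega> N m z = (THE w. optimal_weights w)"
    unfolding w_star_def optimal_weights_def ..
  also have "\<dots> = sup_weights"
    using optimal_sup_weights optimal_weights_unique[OF assms _ optimal_sup_weights]
    by (rule the_equality)
  finally show ?thesis
    using optimal_sup_weights by simp
qed

lemma norm_centroid_map_le:
  assumes "connected \<Omega>" "i < N"
  shows "norm (centroid_map \<Omega> N m z i) \<le> R"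
proof -
  let ?S = "cell (w_star \<Omega> N m z) i"
  have S: "?S \<subseteq> cball 0 R"
    using cell_subset_domain domain_subset_ball ball_subset_cball by blast
  have "R \<ge> 0"
  proof -
    obtain x where "x \<in> ?S"
      using cell_nonempty[OF optimal_w_star[OF assms(1)] assms(2)] by blast
    then have "norm x < R"
      using cell_subset_domain domain_subset_ball by force
    then show ?thesis
      using norm_ge_zero[of x] by linarith
  qed
  have "measure lebesgue ?S = m i"
    using optimal_w_star[OF assms(1)] assms(2) unfolding optimal_weights_def by auto
  with norm_centroid_le[OF cell_lmeasurable S \<open>R \<ge> 0\<close>] show ?thesis
    unfolding centroid_map_def by (simp only:)
qed

end

theorem lemma4p13:
  fixes \<Omega> :: "(real^3) set" and N :: nat and m :: "nat \<Rightarrow> real" and T R :: real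
    and zbar :: "nat \<Rightarrow> real^3" and z z' :: "real \<Rightarrow> nat \<Rightarrow> real^3"
  assumes "open \<Omega>" and "bounded \<Omega>" and "convex \<Omega>" and "measure lebesgue \<Omega> = 1"
    and "N \<ge> 2"
    and "\<forall>i<N. m i > 0" and "(\<Sum>i<N. m i) = 1"
    and "T > 0"
    and "in_D N zbar"
    and "R > 0" and "\<Omega> \<subseteq> ball 0 R"
    and "\<forall>t\<in>{0..T}. in_D N (z t)"
    and "\<forall>i<N. \<forall>t\<in>{0..T}. ((\<lambda>s. z s i) has_vector_derivative z' t i) (at t within {0..T})"
    and "\<forall>i<N. continuous_on {0..T} (\<lambda>t. z' t i)"
    and "\<forall>i<N. \<forall>t\<in>{0..T}. z' t i = Jmat (z t i - centroid_map \<Omega> N m (z t) i)"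
    and "\<forall>i<N. z 0 i = zbar i"
  shows "\<forall>i<N. (\<forall>t\<in>{0..T}. norm (z t i) \<le> norm (zbar i) + R * T) \<and>
           (\<forall>t\<in>{0<..<T}. norm (vector_derivative (\<lambda>s. z s i) (at t))
                              \<le> norm (zbar i) + R * (1 + T))"
proof (intro allI impI)
  fix i assume "i < N"
  have "norm (centroid_map \<Omega> N m (z t) i) \<le> R" if "t \<in> {0..T}" for t
  proof -
    interpret laguerre_transport \<Omega> N "z t" R m
      using assms that by unfold_locales auto
    show ?thesis
      using norm_centroid_map_le convex_connected assms(3) \<open>i < N\<close> by blast
  qed
  moreover have "((\<lambda>s. z s i) has_vector_derivative
      Jmat (z t i - centroid_map \<Omega> N m (z t) i)) (at t within {0..T})" if "t \<in> {0..T}" for t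
    using assms(13,15) \<open>i < N\<close> that by simp
  ultimately show "(\<forall>t\<in>{0..T}. norm (z t i) \<le> norm (zbar i) + R * T) \<and>
      (\<forall>t\<in>{0<..<T}. norm (vector_derivative (\<lambda>s. z s i) (at t)) \<le> norm (zbar i) + R * (1 + T))"
    using Jmat_ode_bounds[of T "\<lambda>s. z s i" "\<lambda>s. centroid_map \<Omega> N m (z s) i" R]
      assms(10,16) \<open>i < N\<close> by simp
qed

end
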